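(* Under the hypotheses of the one-step equivalence result (with $ev$, $rb$, $su=ev$, $hy$ as defined there), $hy$ absorbs $ev$: $hy\circ ev = hy$ as partial functions on terms.
   Context: Terms: $\Lambda ::= x\mid\lambda x.\Lambda\mid\Lambda\Lambda$; $[N/x]B$ is capture-avoiding substitution. An evaluator is a partial function $\Lambda\rightharpoonup\Lambda$ defined by inference rules, undefined where no finite derivation exists; $\mathrm{id}$ is the identity; composition is undefined where the inner evaluator is. Eval-apply template: given evaluators $la,op_1,ar_1,op_2,ar_2$ (possibly $ea$ itself), $ea$ is defined by (var) $ea(x)=x$; (abs) $ea(\lambda x.B)=\lambda x.B'$ if $la(B)=B'$; (con) $ea(MN)=B'$ if $op_1(M)=\lambda x.B$, $ar_1(N)=N'$, $ea([N'/x]B)=B'$; (neu) $ea(MN)=M''N'$ if $op_1(M)=M'$, $M'$ not an abstraction, $op_2(M')=M''$, $ar_2(N)=N'$. $ev$ is a uniform evaluator: $op_1=ev$, $op_2=\mathrm{id}$, $la=la_e$, $ar_1=ar1_e$, $ar_2=ar2_e$ with each in $\{\mathrm{id},ev\}$. Readback: $rb(x)=x$; $rb(\lambda x.B)=\lambda x.B'$ if $la_r(B)=B'$; $rb(MN)=M'N'$ if $rb(M)=M'$, $ar2_r(N)=N'$, subject to: for $p\in\{la,ar2\}$, $p_r\in\{\mathrm{id},ev,rb\circ ev\}$ if $p_e=\mathrm{id}$ and $p_r\in\{\mathrm{id},rb\}$ if $p_e=ev$; at least one of $la_r,ar2_r$ is in $\{ev, rb\circ ev\}$ and at least one is in $\{rb,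 rb\circ ev\}$. $su:=ev$ and $hy$ is the template instance with $op_1=su$, $ar_1=ar1_e$, $op_2=hy$, $la=la_h$, $ar_2=ar2_h$ where for $p\in\{la,ar2\}$: $p_h=\mathrm{id}$ if $p_r=p_e=\mathrm{id}$; $p_h=su$ if $(p_r,p_e)\in\{(\mathrm{id},ev),(ev,\mathrm{id})\}$; $p_h=hy$ if $p_r\in\{rb, rb\circ ev\}$. A strategy $st_2$ absorbs $st_1$ iff $st_2\circ st_1=st_2$. *)

theory Defs
  imports Main
begin

section \<open>Lambda terms (de Bruijn representation, i.e. terms up to alpha-conversion)\<close>

datatype dB = Var nat | App dB dB | Abs dB

primrec lift :: "dB \<Rightarrow> nat \<Rightarrow> dB" where
  "lift (Var i) k = (if i < k then Var i else Var (Suc i))"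
| "lift (App s t) k = App (lift s k) (lift t k)"
| "lift (Abs s) k = Abs (lift s (Suc k))"

primrec subst :: "dB \<Rightarrow> dB \<Rightarrow> nat \<Rightarrow> dB" where
  "subst (Var i) s k = (if k < i then Var (i - 1) else if i = k then s else Var i)"
| "subst (App t u) s k = App (subst t s k) (subst u s k)"
| "subst (Abs t) s k = Abs (subst t (lift s 0) (Suc k))"

text \<open>[N/x]B for a body B of an abstraction: subst B N 0.\<close>

fun is_abs :: "dB \<Rightarrow> bool" where
  "is_abs (Abs _) = True"
| "is_abs _ = False"

datatype choice = Id | Ev

definition apc :: "choice \<Rightarrow> (dB \<Rightarrow> dB \<Rightarrow> bool) \<Rightarrow> dB \<Rightarrow> dB \<Rightarrow> bool" where
  "apc c R t t' = (case c of Id \<Rightarrow> t' = t | Ev \<Rightarrow> R t t')"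

lemma apc_mono[mono]: "(\<And>x y. R x y \<longrightarrow> S x y) \<Longrightarrow> apc c R t t' \<longrightarrow> apc c S t t'"
  by (cases c) (auto simp: apc_def)

datatype rchoice = RId | REv | RRbEv | RRb

definition rapp :: "rchoice \<Rightarrow> (dB \<Rightarrow> dB \<Rightarrow> bool) \<Rightarrow> (dB \<Rightarrow> dB \<Rightarrow> bool) \<Rightarrow> dB \<Rightarrow> dB \<Rightarrow> bool" where
  "rapp c E R t t' = (case c of RId \<Rightarrow> t' = t | REv \<Rightarrow> E t t'
      | RRbEv \<Rightarrow> (\<exists>u. E t u \<and> R u t') | RRb \<Rightarrow> R t t')"

lemma rapp_mono[mono]: "(\<And>x y. R x y \<longrightarrow> S x y) \<Longrightarrow> rapp c E R t t' \<longrightarrow> rapp c E S t t'"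
  by (cases c) (auto simp: rapp_def)

datatype hchoice = HId | HSu | HHy

definition happ :: "hchoice \<Rightarrow> (dB \<Rightarrow> dB \<Rightarrow> bool) \<Rightarrow> (dB \<Rightarrow> dB \<Rightarrow> bool) \<Rightarrow> dB \<Rightarrow> dB \<Rightarrow> bool" where
  "happ c S H t t' = (case c of HId \<Rightarrow> t' = t | HSu \<Rightarrow> S t t' | HHy \<Rightarrow> H t t')"

lemma happ_mono[mono]: "(\<And>x y. R x y \<longrightarrow> S x y) \<Longrightarrow> happ c E R t t' \<longrightarrow> happ c E S t t'"
  by (cases c) (auto simp: happ_def)

text \<open>p_h from (p_r, p_e). The combinations not listed in the paper are excluded
  by the readback constraints; they are given an arbitrary value here.\<close>
fun hch :: "rchoice \<Rightarrow> choice \<Rightarrow> hchoice" where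
  "hch RId Id = HId"
| "hch RId Ev = HSu"
| "hch REv Id = HSu"
| "hch RRb _ = HHy"
| "hch RRbEv _ = HHy"
| "hch REv Ev = HId"

section \<open>Evaluators as (functional) relations: R t t' means the evaluator maps t to t'\<close>

text \<open>Uniform evaluator ev (eval-apply template with op1 = ev, op2 = id).\<close>
inductive ev :: "choice \<Rightarrow> choice \<Rightarrow> choice \<Rightarrow> dB \<Rightarrow> dB \<Rightarrow> bool"
  for lae ar1e ar2e where
  ev_var: "ev lae ar1e ar2e (Var i) (Var i)"
| ev_abs: "apc lae (ev lae ar1e ar2e) B B' \<Longrightarrow> ev lae ar1e ar2e (Abs B) (Abs B')"
| ev_con: "ev lae ar1e ar2e M (Abs B) \<Longrightarrow> apc ar1e (ev lae ar1e ar2e) N N' \<Longrightarrow>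
           ev lae ar1e ar2e (subst B N' 0) B' \<Longrightarrow> ev lae ar1e ar2e (App M N) B'"
| ev_neu: "ev lae ar1e ar2e M M' \<Longrightarrow> \<not> is_abs M' \<Longrightarrow> apc ar2e (ev lae ar1e ar2e) N N' \<Longrightarrow>
           ev lae ar1e ar2e (App M N) (App M' N')"

text \<open>Readback rb (not needed for the statement itself, given for completeness).\<close>
inductive rb :: "choice \<Rightarrow> choice \<Rightarrow> choice \<Rightarrow> rchoice \<Rightarrow> rchoice \<Rightarrow> dB \<Rightarrow> dB \<Rightarrow> bool"
  for lae ar1e ar2e lar ar2r where
  rb_var: "rb lae ar1e ar2e lar ar2r (Var i) (Var i)"
| rb_abs: "rapp lar (ev lae ar1e ar2e) (rb lae ar1e ar2e lar ar2r) B B' \<Longrightarrow>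
           rb lae ar1e ar2e lar ar2r (Abs B) (Abs B')"
| rb_app: "rb lae ar1e ar2e lar ar2r M M' \<Longrightarrow>
           rapp ar2r (ev lae ar1e ar2e) (rb lae ar1e ar2e lar ar2r) N N' \<Longrightarrow>
           rb lae ar1e ar2e lar ar2r (App M N) (App M' N')"

text \<open>Hybrid evaluator hy: op1 = su = ev, ar1 = ar1_e, op2 = hy, la = la_h, ar2 = ar2_h.\<close>
inductive hy :: "choice \<Rightarrow> choice \<Rightarrow> choice \<Rightarrow> hchoice \<Rightarrow> hchoice \<Rightarrow> dB \<Rightarrow> dB \<Rightarrow> bool"
  for lae ar1e ar2e lah ar2h where
  hy_var: "hy lae ar1e ar2e lah ar2h (Var i) (Var i)"
| hy_abs: "happ lah (ev lae ar1e ar2e) (hy lae ar1e ar2e lah ar2h) B B' \<Longrightarrow>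
           hy lae ar1e ar2e lah ar2h (Abs B) (Abs B')"
| hy_con: "ev lae ar1e ar2e M (Abs B) \<Longrightarrow> apc ar1e (ev lae ar1e ar2e) N N' \<Longrightarrow>
           hy lae ar1e ar2e lah ar2h (subst B N' 0) B' \<Longrightarrow> hy lae ar1e ar2e lah ar2h (App M N) B'"
| hy_neu: "ev lae ar1e ar2e M M' \<Longrightarrow> \<not> is_abs M' \<Longrightarrow> hy lae ar1e ar2e lah ar2h M' M'' \<Longrightarrow>
           happ ar2h (ev lae ar1e ar2e) (hy lae ar1e ar2e lah ar2h) N N' \<Longrightarrow>
           hy lae ar1e ar2e lah ar2h (App M N) (App M'' N')"

definition rb_ok :: "choice \<Rightarrow> choice \<Rightarrow> rchoice \<Rightarrow> rchoice \<Rightarrow> bool" where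
  "rb_ok lae ar2e lar ar2r \<longleftrightarrow>
     (lae = Id \<longrightarrow> lar \<in> {RId, REv, RRbEv}) \<and> (lae = Ev \<longrightarrow> lar \<in> {RId, RRb}) \<and>
     (ar2e = Id \<longrightarrow> ar2r \<in> {RId, REv, RRbEv}) \<and> (ar2e = Ev \<longrightarrow> ar2r \<in> {RId, RRb}) \<and>
     (lar \<in> {REv, RRbEv} \<or> ar2r \<in> {REv, RRbEv}) \<and>
     (lar \<in> {RRb, RRbEv} \<or> ar2r \<in> {RRb, RRbEv})"

end

theory Submission
  imports Defs
begin

text \<open>ev is deterministic and every result of ev is a fixed point of ev, so ev is
  transitive.  At each position where ev evaluates, hy applies either su = ev, which then
  absorbs the preceding ev by transitivity, or hy itself, which absorbs it by induction.
  Conversely, a derivation of hy performs ev at all positions where ev evaluates, so it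
  factors through ev.  The side conditions on readback serve only to guarantee that hy
  never uses id where ev evaluates.\<close>

lemma ev_right_unique: "ev lae ar1e ar2e t u \<Longrightarrow> ev lae ar1e ar2e t u' \<Longrightarrow> u' = u"
proof (induction arbitrary: u' rule: ev.induct)
  case (ev_var i)
  then show ?case by (cases rule: ev.cases) auto
next
  case (ev_abs B B')
  from ev_abs.prems obtain B2 where "u' = Abs B2" "apc lae (ev lae ar1e ar2e) B B2"
    by (cases rule: ev.cases) auto
  with ev_abs.IH show ?case by (cases lae) (auto simp: apc_def)
next
  case (ev_con M B N N' B')
  from ev_con.prems show ?case
  proof (cases rule: ev.cases)
    case (ev_con B2 N2)
    with ev_con.IH(1,2) have "B2 = B" "N2 = N'"
      by (auto simp: apc_def split: choice.splits)
    with ev_con ev_con.IH(3) show ?thesis by auto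
  next
    case (ev_neu M' N2)
    with ev_con.IH(1) have "M' = Abs B" by blast
    with ev_neu show ?thesis by simp
  qed
next
  case (ev_neu M M' N N')
  from ev_neu.prems show ?case
  proof (cases rule: ev.cases)
    case (ev_con B2 N2)
    with ev_neu.IH(1) have "Abs B2 = M'" by blast
    with ev_neu.hyps(2) show ?thesis by auto
  next
    case (ev_neu M2 N2)
    with ev_neu.IH have "M2 = M'" "N2 = N'"
      by (auto simp: apc_def split: choice.splits)
    with ev_neu show ?thesis by simp
  qed
qed

lemma ev_result_fixpoint: "ev lae ar1e ar2e t u \<Longrightarrow> ev lae ar1e ar2e u u"
proof (induction rule: ev.induct)
  case (ev_abs B B')
  then show ?case by (cases lae) (auto simp: apc_def intro: ev.ev_abs)
next
  case (ev_neu M M' N N')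
  then have "apc ar2e (ev lae ar1e ar2e) N' N'" by (cases ar2e) (auto simp: apc_def)
  with ev_neu show ?case by (blast intro: ev.ev_neu)
qed (auto intro: ev.intros)

lemma transp_ev: "transp (ev lae ar1e ar2e)"
  by (rule transpI) (metis ev_result_fixpoint ev_right_unique)

definition hy_covers :: "choice \<Rightarrow> hchoice \<Rightarrow> bool" where
  "hy_covers c h \<longleftrightarrow> (c = Ev \<longrightarrow> h \<noteq> HId)"

lemma rb_ok_hy_covers:
  assumes "rb_ok lae ar2e lar ar2r"
  shows "hy_covers lae (hch lar lae)" and "hy_covers ar2e (hch ar2r ar2e)"
proof -
  show "hy_covers lae (hch lar lae)"
    using assms by (cases lar; cases lae) (simp_all add: rb_ok_def hy_covers_def)
  show "hy_covers ar2e (hch ar2r ar2e)"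
    using assms by (cases ar2r; cases ar2e) (simp_all add: rb_ok_def hy_covers_def)
qed

lemma happ_after_apc:
  assumes "transp E" and "hy_covers c h" and E: "apc c E N N'"
    and H_absorbs: "c = Ev \<Longrightarrow> H N' N'' \<Longrightarrow> H N N''" and H: "happ h E H N' N''"
  shows "happ h E H N N''"
proof (cases c)
  case Id
  with E H show ?thesis by (simp add: apc_def)
next
  case Ev
  with E have "E N N'" by (simp add: apc_def)
  with Ev H H_absorbs \<open>transp E\<close> \<open>hy_covers c h\<close> show ?thesis
    by (cases h) (auto simp: happ_def hy_covers_def dest: transpD)
qed

lemma happ_factors_through_apc:
  assumes E_fix: "E N N'' \<Longrightarrow> E N'' N''"
    and "hy_covers c h" and H: "happ h E H N N''"
    and H_factors: "h = HHy \<Longrightarrow> \<exists>w. E N w \<and> H w N''"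
  shows "\<exists>N'. apc c E N N' \<and> happ h E H N' N''"
proof (cases c)
  case Id
  with H show ?thesis by (simp add: apc_def)
next
  case Ev
  show ?thesis
  proof (cases h)
    case HSu
    with Ev H E_fix show ?thesis by (auto simp: apc_def happ_def)
  next
    case HHy
    with Ev H_factors show ?thesis by (auto simp: apc_def happ_def)
  qed (use Ev \<open>hy_covers c h\<close> in \<open>simp add: hy_covers_def\<close>)
qed

context
  fixes lae ar1e ar2e :: choice and lah ar2h :: hchoice
  assumes covers_la: "hy_covers lae lah" and covers_ar2: "hy_covers ar2e ar2h"
begin

private abbreviation (input) E where "E \<equiv> ev lae ar1e ar2e"
private abbreviation (input) H where "H \<equiv> hy lae ar1e ar2e lah ar2h"

lemma hy_absorbs_ev: "E t u \<Longrightarrow> H u v \<Longrightarrow> H t v"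
proof (induction arbitrary: v rule: ev.induct)
  case (ev_var i)
  then show ?case .
next
  case (ev_abs B B')
  from ev_abs.prems obtain B'' where v: "v = Abs B''" and body: "happ lah E H B' B''"
    by (cases rule: hy.cases) auto
  from ev_abs.IH have "apc lae E B B'" and "lae = Ev \<Longrightarrow> H B' B'' \<Longrightarrow> H B B''"
    by (auto simp: apc_def split: choice.splits)
  then have "happ lah E H B B''"
    using body by (rule happ_after_apc[OF transp_ev covers_la])
  with v show ?case by (simp add: hy.hy_abs)
next
  case (ev_con M B N N' B')
  from ev_con.IH(2) have "apc ar1e E N N'"
    by (cases ar1e) (simp_all add: apc_def)
  from ev_con.hyps(1) this ev_con.IH(3)[OF ev_con.prems] show ?case
    by (rule hy.hy_con)
next
  case (ev_neu M M' N N')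
  have "E M' M'" using ev_neu.hyps(1) by (rule ev_result_fixpoint)
  from ev_neu.prems show ?case
  proof (cases rule: hy.cases)
    case (hy_con B N2)
    with \<open>E M' M'\<close> have "M' = Abs B" by (blast dest: ev_right_unique)
    with ev_neu.hyps(2) show ?thesis by simp
  next
    case (hy_neu M1 M'' N'')
    with \<open>E M' M'\<close> have "M1 = M'" by (blast dest: ev_right_unique)
    from ev_neu.IH(2) have "apc ar2e E N N'" and "ar2e = Ev \<Longrightarrow> H N' N'' \<Longrightarrow> H N N''"
      by (auto simp: apc_def split: choice.splits)
    moreover from hy_neu have "happ ar2h E H N' N''" by simp
    ultimately have "happ ar2h E H N N''"
      by (rule happ_after_apc[OF transp_ev covers_ar2])
    with hy_neu \<open>M1 = M'\<close> ev_neu.hyps(1,2) show ?thesis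
      by (auto intro: hy.hy_neu)
  qed
qed

lemma hy_factors_through_ev: "H t v \<Longrightarrow> \<exists>u. E t u \<and> H u v"
proof (induction rule: hy.induct)
  case (hy_var i)
  then show ?case by (auto intro: ev.ev_var hy.hy_var)
next
  case (hy_abs B B')
  from hy_abs.IH have body: "happ lah E H B B'" and "lah = HHy \<Longrightarrow> \<exists>w. E B w \<and> H w B'"
    by (auto simp: happ_def split: hchoice.splits)
  from happ_factors_through_apc[OF _ covers_la body this(2)]
  obtain B0 where "apc lae E B B0" "happ lah E H B0 B'"
    by (blast dest: ev_result_fixpoint)
  then show ?case by (blast intro: ev.ev_abs hy.hy_abs)
next
  case (hy_con M B N N' B')
  then obtain w where "E (subst B N' 0) w" "H w B'" by blast
  with hy_con.hyps(1,2) show ?case by (blast intro: ev.ev_con)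
next
  case (hy_neu M M' M'' N N')
  from hy_neu.IH(2) have arg: "happ ar2h E H N N'" and "ar2h = HHy \<Longrightarrow> \<exists>w. E N w \<and> H w N'"
    by (auto simp: happ_def split: hchoice.splits)
  from happ_factors_through_apc[OF _ covers_ar2 arg this(2)]
  obtain N0 where "apc ar2e E N N0" "happ ar2h E H N0 N'"
    by (blast dest: ev_result_fixpoint)
  moreover have "E M' M'" using hy_neu.hyps(1) by (rule ev_result_fixpoint)
  ultimately have "E (App M N) (App M' N0)" "H (App M' N0) (App M'' N')"
    using hy_neu.hyps by (auto intro: ev.ev_neu hy.hy_neu)
  then show ?case by blast
qed

lemma ev_OO_hy: "E OO H = H"
  using hy_absorbs_ev hy_factors_through_ev by (intro ext) blast

end

theorem mainTheorem11:
  assumes "rb_ok lae ar2e lar ar2r"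
  shows "(ev lae ar1e ar2e) OO (hy lae ar1e ar2e (hch lar lae) (hch ar2r ar2e))
           = hy lae ar1e ar2e (hch lar lae) (hch ar2r ar2e)"
  using ev_OO_hy rb_ok_hy_covers[OF assms] .

end
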